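(* Let $(b_1,b_2)$ and $(\tilde b_1,\tilde b_2)$ be real pairs with $b_1\ne1$, $\tilde b_1\ne1$, $(b_1,b_2)\ne(0,0)$, $(\tilde b_1,\tilde b_2)\ne(0,0)$. Then $\Gamma_c^2(b_1,b_2)$ is linearly equivalent to $\Gamma_c^2(\tilde b_1,\tilde b_2)$ if and only if $b_1=\tilde b_1$ and $b_2=\pm\tilde b_2$. Moreover the Ricci tensor of $\Gamma_c^2(b_1,b_2)$ is positive definite if $b_1>1$ and indefinite if $b_1<1$.
   Context: A torsion-free connection has Christoffel symbols $\nabla_{\partial_{x^i}}\partial_{x^j}=\Gamma_{ij}^k\partial_{x^k}$; curvature $R(X,Y)Z=\nabla_X\nabla_YZ-\nabla_Y\nabla_XZ-\nabla_{[X,Y]}Z$, Ricci tensor $\rho(Y,Z)=\mathrm{Tr}(X\mapsto R(X,Y)Z)$. For real constants, $\Gamma(a,b,c,d,e,f)$ denotes the connection on $\mathbb R^2$ with constant Christoffel symbols $\Gamma_{11}^1=a$, $\Gamma_{11}^2=b$, $\Gamma_{12}^1=\Gamma_{21}^1=c$, $\Gamma_{12}^2=\Gamma_{21}^2=d$, $\Gamma_{22}^1=e$, $\Gamma_{22}^2=f$. For $b_1\ne1$, $\Gamma_c^2(b_1,b_2):=\Gamma(1+b_1,0,b_2,1,\frac{1+b_2^2}{b_1-1},0)$. Two such connections are linearly equivalent if there is $T\in GL(2,\mathbb R)$ with $T^*\nabla_2=\nabla_1$. *)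

theory Defs
  imports Complex_Main
begin

text \<open>A connection on R^2 with constant Christoffel symbols is represented by
  its Christoffel symbols: Chr i j k = Gamma_{ij}^k, indices i, j, k in {1,2}.\<close>

type_synonym christoffel = "nat \<Rightarrow> nat \<Rightarrow> nat \<Rightarrow> real"

definition Gam :: "real \<Rightarrow> real \<Rightarrow> real \<Rightarrow> real \<Rightarrow> real \<Rightarrow> real \<Rightarrow> christoffel" where
  "Gam a b c d e f = (\<lambda>i j k.
     if i = 1 \<and> j = 1 then (if k = 1 then a else b)
     else if i = 2 \<and> j = 2 then (if k = 1 then e else f)
     else (if k = 1 then c else d))"

definition Gamma_c2 :: "real \<Rightarrow> real \<Rightarrow> christoffel" where
  "Gamma_c2 b1 b2 = Gam (1 + b1) 0 b2 1 ((1 + b2^2) / (b1 - 1)) 0"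

text \<open>Curvature components: R(d_i,d_j)d_k = sum_m curv G i j k m d_m
  (constant coefficients, coordinate fields commute).\<close>
definition curv :: "christoffel \<Rightarrow> nat \<Rightarrow> nat \<Rightarrow> nat \<Rightarrow> nat \<Rightarrow> real" where
  "curv G i j k m = (\<Sum>l\<in>{1..2}. G j k l * G i l m - G i k l * G j l m)"

text \<open>Ricci tensor rho(d_j,d_k) = Tr(X \<mapsto> R(X,d_j)d_k).\<close>
definition ricci :: "christoffel \<Rightarrow> nat \<Rightarrow> nat \<Rightarrow> real" where
  "ricci G j k = (\<Sum>i\<in>{1..2}. curv G i j k i)"

definition ricci_form :: "christoffel \<Rightarrow> real \<times> real \<Rightarrow> real \<times> real \<Rightarrow> real" where
  "ricci_form G v w = (let x = (\<lambda>i. if i = (1::nat) then fst v else snd v);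
                           y = (\<lambda>i. if i = (1::nat) then fst w else snd w)
                       in \<Sum>j\<in>{1..2}. \<Sum>k\<in>{1..2}. x j * y k * ricci G j k)"

definition pos_def_form :: "(real \<times> real \<Rightarrow> real \<times> real \<Rightarrow> real) \<Rightarrow> bool" where
  "pos_def_form B = (\<forall>v. v \<noteq> (0,0) \<longrightarrow> B v v > 0)"

definition indefinite_form :: "(real \<times> real \<Rightarrow> real \<times> real \<Rightarrow> real) \<Rightarrow> bool" where
  "indefinite_form B = ((\<exists>v. B v v > 0) \<and> (\<exists>w. B w w < 0))"

text \<open>T in GL(2,R), given by its matrix T a b (a,b in {1,2}), T d_i = sum_a T a i d_a.
  T^* nabla2 = nabla1 means T(nabla1_X Y) = nabla2_{TX} (TY); for constant-coefficient
  connections and linear T it suffices to test on coordinate fields.\<close>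
definition lin_equiv :: "christoffel \<Rightarrow> christoffel \<Rightarrow> bool" where
  "lin_equiv G1 G2 = (\<exists>T :: nat \<Rightarrow> nat \<Rightarrow> real.
      T 1 1 * T 2 2 - T 1 2 * T 2 1 \<noteq> 0 \<and>
      (\<forall>i\<in>{1..2}. \<forall>j\<in>{1..2}. \<forall>c\<in>{1..2}.
         (\<Sum>k\<in>{1..2}. G1 i j k * T c k) =
         (\<Sum>a\<in>{1..2}. \<Sum>b\<in>{1..2}. T a i * T b j * G2 a b c)))"

end

theory Submission imports Defs begin

text \<open>The Ricci form of \<open>\<Gamma>\<^sub>c\<^sup>2(b\<^sub>1,b\<^sub>2)\<close> is the binary form
  \<open>b\<^sub>1 x\<^sup>2 + 2 b\<^sub>2 x y + (e b\<^sub>1 - b\<^sub>2\<^sup>2) y\<^sup>2\<close> with \<open>e = (1 + b\<^sub>2\<^sup>2)/(b\<^sub>1 - 1)\<close>, whose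
  determinant is \<open>(b\<^sub>1\<^sup>2 + b\<^sub>2\<^sup>2)/(b\<^sub>1 - 1)\<close>; its sign gives definiteness resp. indefiniteness.
  For the classification, writing out \<open>T\<^sup>*\<nabla>\<^sub>2 = \<nabla>\<^sub>1\<close> gives six polynomial equations in the
  entries of \<open>T\<close>. If \<open>T\<close> is not upper triangular they force
  \<open>((2 T\<^sub>1\<^sub>2 - b\<^sub>2)\<^sup>2 + 1) T\<^sub>2\<^sub>1 = 0\<close>, which is absurd; if it is, then \<open>T = diag(1, s)\<close> with
  \<open>s\<^sup>2 = 1\<close>, \<open>b\<^sub>1 = c\<^sub>1\<close> and \<open>b\<^sub>2 = s c\<^sub>2\<close>, and conversely these reflections are equivalences.\<close>

lemma sum_atLeastAtMost_1_2: "(\<Sum>k\<in>{1..2::nat}. f k) = f 1 + f 2"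
  by (simp add: numeral_2_eq_2)

lemma ball_atLeastAtMost_1_2: "(\<forall>k\<in>{1..2::nat}. P k) \<longleftrightarrow> P 1 \<and> P 2"
  by (auto simp add: numeral_2_eq_2 le_Suc_eq)

lemma pos_def_form_binaryI:
  fixes a b c :: real
  assumes B: "\<And>x y. B (x, y) (x, y) = a * x\<^sup>2 + 2 * b * x * y + c * y\<^sup>2"
    and a: "a > 0" and det: "a * c - b\<^sup>2 > 0"
  shows "pos_def_form B"
  unfolding pos_def_form_def
proof (intro allI impI)
  fix v :: "real \<times> real"
  assume v: "v \<noteq> (0, 0)"
  obtain x y where xy: "v = (x, y)" by (cases v)
  have square: "a * B v v = (a * x + b * y)\<^sup>2 + (a * c - b\<^sup>2) * y\<^sup>2"
    unfolding xy B by (simp add: algebra_simps power2_eq_square)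
  have "a * B v v > 0"
  proof (cases "y = 0")
    case True
    with v xy have "x \<noteq> 0" by simp
    with True a show ?thesis unfolding square by simp
  next
    case False
    with det show ?thesis unfolding square
      by (simp add: add_nonneg_pos)
  qed
  with a show "B v v > 0" by (simp add: zero_less_mult_iff)
qed

lemma indefinite_form_binaryI:
  fixes a b c :: real
  assumes B: "\<And>x y. B (x, y) (x, y) = a * x\<^sup>2 + 2 * b * x * y + c * y\<^sup>2"
    and det: "a * c - b\<^sup>2 < 0"
  shows "indefinite_form B"
  unfolding indefinite_form_def
proof (cases "a = 0")
  case True
  with det have "b \<noteq> 0" by simp
  \<comment> \<open>\<open>B (x, 1) (x, 1) = 2 b x + c\<close> is affine and nonconstant in \<open>x\<close>\<close>
  then have "B ((1 - c) / (2 * b), 1) ((1 - c) / (2 * b), 1) = 1"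
    and "B ((- 1 - c) / (2 * b), 1) ((- 1 - c) / (2 * b), 1) = - 1"
    unfolding B True by (simp_all add: field_simps)
  then show "(\<exists>v. B v v > 0) \<and> (\<exists>w. B w w < 0)"
    by (metis neg_less_0_iff_less zero_less_one)
next
  case False
  have "B (1, 0) (1, 0) = a" unfolding B by simp
  moreover have "a * B (- b, a) (- b, a) = a\<^sup>2 * (a * c - b\<^sup>2)"
    unfolding B by (simp add: algebra_simps power2_eq_square)
  moreover have "a\<^sup>2 * (a * c - b\<^sup>2) < 0" using False det by (simp add: mult_pos_neg)
  ultimately have "B (1, 0) (1, 0) * B (- b, a) (- b, a) < 0" by simp
  then show "(\<exists>v. B v v > 0) \<and> (\<exists>w. B w w < 0)"
    by (metis mult_less_0_iff)
qed

lemma ricci_form_diag: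
  "ricci_form G (x, y) (x, y) =
     ricci G 1 1 * x\<^sup>2 + (ricci G 1 2 + ricci G 2 1) * x * y + ricci G 2 2 * y\<^sup>2"
  unfolding ricci_form_def Let_def sum_atLeastAtMost_1_2
  by (simp add: algebra_simps power2_eq_square)

lemma ricci_Gam:
  "ricci (Gam a 0 c 1 e 0) 1 1 = a - 1"
  "ricci (Gam a 0 c 1 e 0) 1 2 = c"
  "ricci (Gam a 0 c 1 e 0) 2 1 = c"
  "ricci (Gam a 0 c 1 e 0) 2 2 = e * (a - 1) - c\<^sup>2"
  unfolding ricci_def curv_def Gam_def sum_atLeastAtMost_1_2
  by (simp_all add: algebra_simps power2_eq_square)

lemma ricci_form_Gamma_c2:
  "ricci_form (Gamma_c2 b1 b2) (x, y) (x, y) =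
     b1 * x\<^sup>2 + 2 * b2 * x * y + ((1 + b2\<^sup>2) / (b1 - 1) * b1 - b2\<^sup>2) * y\<^sup>2"
  unfolding ricci_form_diag Gamma_c2_def ricci_Gam by simp

lemma ricci_det_Gamma_c2:
  fixes b1 b2 :: real
  assumes "b1 \<noteq> 1"
  shows "b1 * ((1 + b2\<^sup>2) / (b1 - 1) * b1 - b2\<^sup>2) - b2\<^sup>2 = (b1\<^sup>2 + b2\<^sup>2) / (b1 - 1)"
  using assms by (simp add: field_simps power2_eq_square)

lemma pos_def_ricci_Gamma_c2:
  fixes b1 b2 :: real
  assumes b1: "b1 > 1"
  shows "pos_def_form (ricci_form (Gamma_c2 b1 b2))"
proof (rule pos_def_form_binaryI[where B = "ricci_form (Gamma_c2 b1 b2)", OF ricci_form_Gamma_c2])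
  have "(b1\<^sup>2 + b2\<^sup>2) / (b1 - 1) > 0" using b1 by (simp add: add_pos_nonneg)
  then show "b1 * ((1 + b2\<^sup>2) / (b1 - 1) * b1 - b2\<^sup>2) - b2\<^sup>2 > 0"
    using b1 by (subst ricci_det_Gamma_c2) simp_all
qed (use b1 in simp)

lemma indefinite_ricci_Gamma_c2:
  fixes b1 b2 :: real
  assumes b1: "b1 < 1" and nonzero: "(b1, b2) \<noteq> (0, 0)"
  shows "indefinite_form (ricci_form (Gamma_c2 b1 b2))"
proof (rule indefinite_form_binaryI[where B = "ricci_form (Gamma_c2 b1 b2)", OF ricci_form_Gamma_c2])
  have "b1\<^sup>2 + b2\<^sup>2 > 0" using nonzero by (simp add: sum_power2_gt_zero_iff)
  then have "(b1\<^sup>2 + b2\<^sup>2) / (b1 - 1) < 0" using b1 by (simp add: divide_pos_neg)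
  then show "b1 * ((1 + b2\<^sup>2) / (b1 - 1) * b1 - b2\<^sup>2) - b2\<^sup>2 < 0"
    using b1 by (subst ricci_det_Gamma_c2) simp_all
qed

text \<open>The six components of \<open>T\<^sup>*\<nabla>\<^sub>2 = \<nabla>\<^sub>1\<close> for \<open>T = (p q; r s)\<close>, with \<open>e\<close>, \<open>E\<close> the
  \<open>\<Gamma>\<^sub>2\<^sub>2\<^sup>1\<close> symbols of the two connections.\<close>

lemma Gamma_c2_intertwiner_params:
  fixes p q r s b1 b2 c1 c2 e E :: real
  assumes b1: "b1 \<noteq> 1" and c1: "c1 \<noteq> 1"
    and e: "e = (1 + b2\<^sup>2) / (b1 - 1)" and E: "E = (1 + c2\<^sup>2) / (c1 - 1)"
    and det: "p * s - q * r \<noteq> 0"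
    and E1: "(1 + b1) * p = (1 + c1) * p * p + 2 * c2 * p * r + E * r * r"
    and E2: "(1 + b1 - 2 * p) * r = 0"
    and E3: "b2 * p + q = (1 + c1) * p * q + c2 * (p * s + q * r) + E * r * s"
    and E4: "b2 * r + s = p * s + q * r"
    and E5: "e * p = (1 + c1) * q * q + 2 * c2 * q * s + E * s * s"
    and E6: "e * r = 2 * q * s"
  shows "b1 = c1 \<and> (b2 = c2 \<or> b2 = - c2)"
proof (cases "r = 0")
  case False
  from E2 False have p: "b1 - 1 = 2 * (p - 1)" by simp
  from E4 have "s * (p - 1) = r * (b2 - q)" by (simp add: algebra_simps)
  with p have s: "s * (b1 - 1) = 2 * r * (b2 - q)" by (metis mult.assoc mult.commute)
  from e b1 have "e * (b1 - 1) = 1 + b2\<^sup>2" by simp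
  then have "r * (1 + b2\<^sup>2) = (e * r) * (b1 - 1)" by (metis mult.assoc mult.commute)
  also have "\<dots> = 2 * q * (s * (b1 - 1))" using E6 by simp
  also have "\<dots> = 4 * q * r * (b2 - q)" using s by simp
  finally have "r * ((2 * q - b2)\<^sup>2 + 1) = 0" by (simp add: algebra_simps power2_eq_square)
  moreover have "(2 * q - b2)\<^sup>2 + 1 \<noteq> 0" by (metis add_nonneg_pos zero_le_power2 zero_less_one less_irrefl)
  ultimately show ?thesis using False by simp
next
  case True
  with det have "p \<noteq> 0" "s \<noteq> 0" by auto
  with True E6 E4 have q: "q = 0" and p: "p = 1" by auto
  from E1 True p have bc: "b1 = c1" by simp
  from E3 True p q have b2: "b2 = c2 * s" by simp
  from E5 p q have "e = E * s\<^sup>2" by (simp add: power2_eq_square)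
  with e E bc b1 have "1 + b2\<^sup>2 = (1 + c2\<^sup>2) * s\<^sup>2" by (simp add: field_simps)
  with b2 have "s\<^sup>2 = 1" by (simp add: algebra_simps power2_eq_square)
  then have "s = 1 \<or> s = - 1" by (simp add: power2_eq_1_iff)
  with bc b2 show ?thesis by auto
qed

lemma lin_equiv_Gamma_c2_imp_params:
  assumes b1: "b1 \<noteq> 1" and c1: "c1 \<noteq> 1"
    and equiv: "lin_equiv (Gamma_c2 b1 b2) (Gamma_c2 c1 c2)"
  shows "b1 = c1 \<and> (b2 = c2 \<or> b2 = - c2)"
proof -
  define e where "e = (1 + b2\<^sup>2) / (b1 - 1)"
  define E where "E = (1 + c2\<^sup>2) / (c1 - 1)"
  obtain T where det: "T 1 1 * T 2 2 - T 1 2 * T 2 1 \<noteq> 0" and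
    intertwines: "\<forall>i\<in>{1..2}. \<forall>j\<in>{1..2}. \<forall>c\<in>{1..2}.
         (\<Sum>k\<in>{1..2}. Gamma_c2 b1 b2 i j k * T c k) =
         (\<Sum>a\<in>{1..2}. \<Sum>b\<in>{1..2}. T a i * T b j * Gamma_c2 c1 c2 a b c)"
    using equiv unfolding lin_equiv_def by blast
  have component: "(\<Sum>k\<in>{1..2}. Gamma_c2 b1 b2 i j k * T c k) =
      (\<Sum>a\<in>{1..2}. \<Sum>b\<in>{1..2}. T a i * T b j * Gamma_c2 c1 c2 a b c)"
    if "i \<in> {1, 2}" "j \<in> {1, 2}" "c \<in> {1, 2}" for i j c
    using intertwines that by (auto simp: numeral_2_eq_2)
  note eq = component[unfolded sum_atLeastAtMost_1_2 Gamma_c2_def Gam_def, folded e_def E_def]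
  show ?thesis
    apply (rule Gamma_c2_intertwiner_params[OF b1 c1 e_def E_def det])
    subgoal using eq[of 1 1 1] by (simp add: algebra_simps)
    subgoal using eq[of 1 1 2] by (simp add: algebra_simps)
    subgoal using eq[of 1 2 1] by (simp add: algebra_simps)
    subgoal using eq[of 1 2 2] by (simp add: algebra_simps)
    subgoal using eq[of 2 2 1] by (simp add: algebra_simps)
    subgoal using eq[of 2 2 2] by (simp add: algebra_simps)
    done
qed

lemma lin_equiv_Gamma_c2_reflection:
  fixes s :: real
  assumes "s\<^sup>2 = 1"
  shows "lin_equiv (Gamma_c2 b1 (s * b2)) (Gamma_c2 b1 b2)"
  unfolding lin_equiv_def ball_atLeastAtMost_1_2 sum_atLeastAtMost_1_2 Gamma_c2_def Gam_def
  by (rule exI[of _ "\<lambda>i j. if i = 1 \<and> j = 1 then 1 else if i = 2 \<and> j = 2 then s else 0"])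
    (use assms in \<open>auto simp: power2_eq_square algebra_simps\<close>)

theorem mainTheorem16:
  fixes b1 b2 c1 c2 :: real
  assumes "b1 \<noteq> 1" and "c1 \<noteq> 1" and "(b1, b2) \<noteq> (0, 0)" and "(c1, c2) \<noteq> (0, 0)"
  shows "(lin_equiv (Gamma_c2 b1 b2) (Gamma_c2 c1 c2) \<longleftrightarrow> b1 = c1 \<and> (b2 = c2 \<or> b2 = - c2))
         \<and> (b1 > 1 \<longrightarrow> pos_def_form (ricci_form (Gamma_c2 b1 b2)))
         \<and> (b1 < 1 \<longrightarrow> indefinite_form (ricci_form (Gamma_c2 b1 b2)))"
proof (intro conjI impI iffI)
  assume "b1 = c1 \<and> (b2 = c2 \<or> b2 = - c2)"
  then show "lin_equiv (Gamma_c2 b1 b2) (Gamma_c2 c1 c2)"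
    using lin_equiv_Gamma_c2_reflection[of 1 c1 c2] lin_equiv_Gamma_c2_reflection[of "- 1" c1 c2]
    by auto
qed (use assms lin_equiv_Gamma_c2_imp_params pos_def_ricci_Gamma_c2 indefinite_ricci_Gamma_c2
  in auto)

end
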